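(* Let $d\ge 3$ be odd. The group $G_d$ is neither torsion nor torsion-free: it contains elements of infinite order and nontrivial elements of finite order (namely the element $\xi_i=[a_{\overline{i+1}}^2,a_{\overline{i+2}}]\,([a_i,a_{\overline{i+1}}][a_{\overline{i+1}},a_{\overline{i+2}}])^{-1}$, which acts as $(i\ \overline{i+2})(\overline{i+1}\ \overline{i+3})$ on the first level with all first-level sections trivial, has order $3$ if $d=3$ and order $2$ if $d\ge5$).
   Context: Let $d\ge 3$, $X=\{1,\dots,d\}$, $T$ the $d$-regular rooted tree with vertex set $X^*$. $\mathrm{Aut}(T)$ is the group of root-preserving automorphisms with product left-to-right: $(gh)(u)=h(g(u))$. Sections $g|_u$ are defined by $g(uv)=g(u)\,g|_u(v)$; we write $g=(g|_1,\dots,g|_d)\lambda_g$ with $\lambda_g\in S_d$ the action on the first level; $e$ is the identity; $\overline{j}\in\{1,\dots,d\}$ denotes $j$ mod $d$. $G_d=\langle a_1,\dots,a_d\rangle\le\mathrm{Aut}(T)$ where $a_i$ acts on the first level as $(i\ \overline{i+1})$, with $a_i|_i=a_i$, $a_i|_{\overline{i+1}}=a_{\overline{i+1}}$, and $a_i|_x=e$ otherwise. Commutators: $[g,h]=g^{-1}h^{-1}gh$. *)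

theory Defs
  imports Main
begin

text \<open>The alphabet is X = {1..d}; vertices of the tree are words (nat lists) over X.
  Tree automorphisms are modelled as bijections of nat list that act on X* and are the
  identity on every list not in X*.\<close>

definition nxt :: "nat \<Rightarrow> nat \<Rightarrow> nat" where
  "nxt d i = i mod d + 1"

fun gen_rec :: "nat \<Rightarrow> nat \<Rightarrow> nat list \<Rightarrow> nat list" where
  "gen_rec d i [] = []"
| "gen_rec d i (x # w) =
     (if x = i then nxt d i # gen_rec d i w
      else if x = nxt d i then i # gen_rec d (nxt d i) w
      else x # w)"

text \<open>The generator a_i of G_d: swaps i and overline(i+1) on the first level, with
  section a_i at i, a_(i+1) at overline(i+1), trivial elsewhere.\<close>
definition gen :: "nat \<Rightarrow> nat \<Rightarrow> nat list \<Rightarrow> nat list" where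
  "gen d i u = (if set u \<subseteq> {1..d} then gen_rec d i u else u)"

definition pmul :: "('a \<Rightarrow> 'a) \<Rightarrow> ('a \<Rightarrow> 'a) \<Rightarrow> ('a \<Rightarrow> 'a)" where
  "pmul g h = h \<circ> g"

definition pinv :: "('a \<Rightarrow> 'a) \<Rightarrow> ('a \<Rightarrow> 'a)" where
  "pinv g = inv g"

definition comm :: "('a \<Rightarrow> 'a) \<Rightarrow> ('a \<Rightarrow> 'a) \<Rightarrow> ('a \<Rightarrow> 'a)" where
  "comm g h = pmul (pmul (pmul (pinv g) (pinv h)) g) h"

inductive_set Gd :: "nat \<Rightarrow> (nat list \<Rightarrow> nat list) set" for d :: nat where
  Gd_id: "id \<in> Gd d"
| Gd_gen: "g \<in> Gd d \<Longrightarrow> i \<in> {1..d} \<Longrightarrow> pmul g (gen d i) \<in> Gd d"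
| Gd_geninv: "g \<in> Gd d \<Longrightarrow> i \<in> {1..d} \<Longrightarrow> pmul g (pinv (gen d i)) \<in> Gd d"

definition xi :: "nat \<Rightarrow> nat \<Rightarrow> nat list \<Rightarrow> nat list" where
  "xi d i = (let a = gen d; i1 = nxt d i; i2 = nxt d i1 in
     pmul (comm (pmul (a i1) (a i1)) (a i2))
          (pinv (pmul (comm (a i) (a i1)) (comm (a i1) (a i2)))))"

definition tr :: "nat \<Rightarrow> nat \<Rightarrow> nat \<Rightarrow> nat" where
  "tr a b x = (if x = a then b else if x = b then a else x)"

text \<open>The permutation (i i+2)(i+1 i+3) of the first level, as a map x |-> (i i+2)((i+1 i+3) x)
  (the two transpositions commute for d >= 5; for d = 3 this is the composition realised by xi_i).\<close>
definition xi_perm :: "nat \<Rightarrow> nat \<Rightarrow> nat \<Rightarrow> nat" where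
  "xi_perm d i x = (let i1 = nxt d i; i2 = nxt d i1; i3 = nxt d i2 in tr i i2 (tr i1 i3 x))"

text \<open>g has order exactly k (powers of a single element do not depend on the product convention).\<close>
definition has_order :: "('a \<Rightarrow> 'a) \<Rightarrow> nat \<Rightarrow> bool" where
  "has_order g k \<longleftrightarrow> 0 < k \<and> g ^^ k = id \<and> (\<forall>n. 0 < n \<and> n < k \<longrightarrow> g ^^ n \<noteq> id)"

definition infinite_order :: "('a \<Rightarrow> 'a) \<Rightarrow> bool" where
  "infinite_order g \<longleftrightarrow> (\<forall>n > 0. g ^^ n \<noteq> id)"

definition torsion_group :: "('a \<Rightarrow> 'a) set \<Rightarrow> bool" where
  "torsion_group G \<longleftrightarrow> (\<forall>g \<in> G. \<exists>n > 0. g ^^ n = id)"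

definition torsion_free_group :: "('a \<Rightarrow> 'a) set \<Rightarrow> bool" where
  "torsion_free_group G \<longleftrightarrow> (\<forall>g \<in> G. g \<noteq> id \<longrightarrow> (\<forall>n > 0. g ^^ n \<noteq> id))"

end

(*
  The element xi_i moves only the first letter of a word, by the permutation
  (i i+2)(i+1 i+3), so its order is the order of that permutation: a 3-cycle
  when d = 3 and a product of two disjoint transpositions when d >= 5.

  For infinite order take g = a_1 a_2 ... a_d and h = a_d ... a_1.  The first
  letter 2 has orbit of length d - 1 under g, and g^(d-1) fixes it with section
  conjugate to h; symmetrically h^(d-1) fixes 2 with section conjugate to g.
  Hence g^n = 1 forces (d - 1) | n and h^(n/(d-1)) = 1, and vice versa, so by
  infinite descent neither g nor h has finite order.
*)
theory Submission
  imports Defs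
begin

(* Keeps the alphabet {1..d} from being rewritten to {Suc 0..d}, so that the
   simplifier can use the lemmas below, which are stated for {1..d}. *)
declare One_nat_def [simp del]

lemma funpow_mem: "f ` S \<subseteq> S \<Longrightarrow> x \<in> S \<Longrightarrow> (f ^^ n) x \<in> S"
  by (induction n) auto

lemma funpow_Cons_first_level:
  assumes "\<And>x w. x \<in> X \<Longrightarrow> set w \<subseteq> X \<Longrightarrow> f (x # w) = p x # w" and "p ` X \<subseteq> X"
    and "x \<in> X" "set w \<subseteq> X"
  shows "(f ^^ n) (x # w) = (p ^^ n) x # w"
proof (induction n)
  case (Suc n)
  with assms funpow_mem[OF assms(2,3), of n] show ?case by simp
qed simp

lemma funpow_eq_id_iff_first_level:
  fixes f :: "'a list \<Rightarrow> 'a list"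
  assumes Cons: "\<And>x w. x \<in> X \<Longrightarrow> set w \<subseteq> X \<Longrightarrow> f (x # w) = p x # w"
    and other: "\<And>u. u = [] \<or> \<not> set u \<subseteq> X \<Longrightarrow> f u = u"
    and perm: "p ` X \<subseteq> X" "\<And>x. x \<notin> X \<Longrightarrow> p x = x"
  shows "f ^^ n = id \<longleftrightarrow> p ^^ n = id"
proof
  assume f_id: "f ^^ n = id"
  show "p ^^ n = id"
  proof
    fix x
    show "(p ^^ n) x = id x"
    proof (cases "x \<in> X")
      case True
      then have "(p ^^ n) x # [] = (f ^^ n) [x]"
        using funpow_Cons_first_level[OF Cons perm(1)] by simp
      then show ?thesis using f_id by simp
    next
      case False
      then show ?thesis using perm(2) by (induction n) auto
    qed
  qed
next
  assume p_id: "p ^^ n = id"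
  show "f ^^ n = id"
  proof
    fix u
    show "(f ^^ n) u = id u"
    proof (cases "u = [] \<or> \<not> set u \<subseteq> X")
      case True
      then show ?thesis using other by (induction n) auto
    next
      case False
      then obtain x w where "u = x # w" "x \<in> X" "set w \<subseteq> X" by (cases u) auto
      then show ?thesis using funpow_Cons_first_level[OF Cons perm(1)] p_id by simp
    qed
  qed
qed

lemma has_order_iff_first_level:
  fixes f :: "'a list \<Rightarrow> 'a list"
  assumes "\<And>x w. x \<in> X \<Longrightarrow> set w \<subseteq> X \<Longrightarrow> f (x # w) = p x # w"
    and "\<And>u. u = [] \<or> \<not> set u \<subseteq> X \<Longrightarrow> f u = u"
    and "p ` X \<subseteq> X" "\<And>x. x \<notin> X \<Longrightarrow> p x = x"
  shows "has_order f k \<longleftrightarrow> has_order p k"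
  unfolding has_order_def using funpow_eq_id_iff_first_level[OF assms] by simp

lemma funpow_one: "(f :: 'a \<Rightarrow> 'a) ^^ 1 = f"
  by (simp add: One_nat_def)

lemma has_order_two_iff: "has_order f 2 \<longleftrightarrow> f ^^ 2 = id \<and> f \<noteq> id"
proof -
  have "0 < n \<and> n < 2 \<longleftrightarrow> n = (1::nat)" for n by auto
  then show ?thesis by (auto simp: has_order_def funpow_one)
qed

lemma has_order_three_iff: "has_order f 3 \<longleftrightarrow> f ^^ 3 = id \<and> f \<noteq> id \<and> f ^^ 2 \<noteq> id"
proof -
  have "0 < n \<and> n < 3 \<longleftrightarrow> n = (1::nat) \<or> n = 2" for n by auto
  then show ?thesis by (auto simp: has_order_def funpow_one)
qed

lemma has_order_imp_neq_id: "has_order f k \<Longrightarrow> 1 < k \<Longrightarrow> f \<noteq> id"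
  unfolding has_order_def by (metis funpow_one zero_less_one)

lemma funpow_mult_return:
  assumes "\<And>v. v \<in> S \<Longrightarrow> (f ^^ k) (a # v) = a # \<phi> v" and "\<phi> ` S \<subseteq> S" and "v \<in> S"
  shows "(f ^^ (q * k)) (a # v) = a # (\<phi> ^^ q) v"
proof (induction q)
  case (Suc q)
  then show ?case
    using assms funpow_mem[OF assms(2,3), of q] by (simp add: funpow_add mult.commute[of k])
qed simp

lemma return_time_dvd:
  assumes "0 < k"
    and return: "\<And>v. v \<in> S \<Longrightarrow> (f ^^ k) (a # v) = a # \<phi> v" "\<phi> ` S \<subseteq> S"
    and first_return: "\<And>j v u. 0 < j \<Longrightarrow> j < k \<Longrightarrow> v \<in> S \<Longrightarrow> (f ^^ j) (a # v) \<noteq> a # u"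
    and "v \<in> S" "(f ^^ n) (a # v) = a # v"
  shows "k dvd n"
proof (rule ccontr)
  assume "\<not> k dvd n"
  then have "0 < n mod k" "n mod k < k"
    using assms(1) by (simp_all add: dvd_eq_mod_eq_0)
  have "a # v = (f ^^ (n mod k)) ((f ^^ (n div k * k)) (a # v))"
    using \<open>(f ^^ n) (a # v) = a # v\<close> by (metis comp_apply funpow_add mod_div_mult_eq)
  also have "\<dots> = (f ^^ (n mod k)) (a # (\<phi> ^^ (n div k)) v)"
    using funpow_mult_return[OF return \<open>v \<in> S\<close>] by simp
  finally show False
    using first_return[OF \<open>0 < n mod k\<close> \<open>n mod k < k\<close> funpow_mem[OF return(2) \<open>v \<in> S\<close>]] by metis
qed

lemma periodic_descent:
  assumes "1 < k"
    and return: "\<And>v. v \<in> S \<Longrightarrow> (f ^^ k) (a # v) = a # \<phi> v" "\<phi> ` S \<subseteq> S"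
    and first_return: "\<And>j v u. 0 < j \<Longrightarrow> j < k \<Longrightarrow> v \<in> S \<Longrightarrow> (f ^^ j) (a # v) \<noteq> a # u"
    and conj: "S \<subseteq> c ` S" "\<And>v. c (\<phi> v) = \<psi> (c v)"
    and S: "[] \<in> S" "\<And>v. v \<in> S \<Longrightarrow> a # v \<in> S"
    and periodic: "\<forall>u \<in> S. (f ^^ n) u = u" and "0 < n"
  shows "\<exists>m. 0 < m \<and> m < n \<and> (\<forall>u \<in> S. (\<psi> ^^ m) u = u)"
proof (intro exI conjI ballI)
  have "k dvd n"
    using return_time_dvd[OF _ return first_return S(1)] periodic S assms(1) by simp
  then have n: "n = n div k * k" by simp
  then show "0 < n div k" "n div k < n"
    using \<open>0 < n\<close> \<open>1 < k\<close> by (metis mult_0 neq0_conv, simp)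
  fix u assume "u \<in> S"
  then obtain v where "v \<in> S" "u = c v" using conj(1) by blast
  have "a # (\<phi> ^^ (n div k)) v = a # v"
    using funpow_mult_return[OF return \<open>v \<in> S\<close>] periodic S(2)[OF \<open>v \<in> S\<close>] n by metis
  moreover have "c ((\<phi> ^^ q) v) = (\<psi> ^^ q) (c v)" for q
    by (induction q) (simp_all add: conj(2))
  ultimately show "(\<psi> ^^ (n div k)) u = u"
    using \<open>u = c v\<close> by (metis list.inject)
qed

lemma nxt_ge_1 [simp]: "1 \<le> nxt d i"
  by (simp add: nxt_def)

lemma nxt_le [simp]: "0 < d \<Longrightarrow> nxt d i \<le> d"
  unfolding nxt_def by (metis mod_less_divisor Suc_eq_plus1 Suc_leI)

lemma nxt_in: "0 < d \<Longrightarrow> nxt d i \<in> {1..d}"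
  by simp

lemma nxt_of_less: "0 < j \<Longrightarrow> j < d \<Longrightarrow> nxt d j = Suc j"
  by (simp add: nxt_def)

lemma nxt_self: "0 < d \<Longrightarrow> nxt d d = 1"
  by (simp add: nxt_def)

lemma nxt_neq_of_le: "j \<in> {1..d} \<Longrightarrow> 2 \<le> y \<Longrightarrow> y \<le> j \<Longrightarrow> nxt d j \<noteq> y"
  by (cases "j = d") (auto simp: nxt_of_less nxt_self)

lemma funpow_nxt: "i \<in> {1..d} \<Longrightarrow> (nxt d ^^ k) i = (i - 1 + k) mod d + 1"
proof (induction k)
  case 0
  then show ?case by (cases i) auto
next
  case (Suc k)
  then show ?case by (simp add: nxt_def mod_add_left_eq)
qed

lemma funpow_nxt_eq_self_iff:
  assumes "i \<in> {1..d}"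
  shows "(nxt d ^^ k) i = i \<longleftrightarrow> d dvd k"
proof -
  have "i = (i - 1) mod d + 1" using assms by (cases i) auto
  then have "(nxt d ^^ k) i = i \<longleftrightarrow> (i - 1 + k) mod d = (i - 1) mod d"
    using funpow_nxt[OF assms, of k] by linarith
  also have "\<dots> \<longleftrightarrow> d dvd k" by (simp add: mod_eq_dvd_iff_nat)
  finally show ?thesis .
qed

lemma nxt_neq_self: "2 \<le> d \<Longrightarrow> i \<in> {1..d} \<Longrightarrow> nxt d i \<noteq> i"
  using funpow_nxt_eq_self_iff[of i d 1] by (auto simp: funpow_one dest: dvd_imp_le)

lemma nxt_distinct3:
  assumes "3 \<le> d" "i \<in> {1..d}"
  shows "nxt d i \<noteq> i" "nxt d (nxt d i) \<noteq> i" "nxt d (nxt d i) \<noteq> nxt d i"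
proof -
  have "\<not> d dvd 2" using assms(1) by (auto dest: dvd_imp_le)
  then show "nxt d (nxt d i) \<noteq> i"
    using funpow_nxt_eq_self_iff[OF assms(2), of 2] by (simp add: numeral_2_eq_2)
  show "nxt d i \<noteq> i" "nxt d (nxt d i) \<noteq> nxt d i"
    using assms nxt_neq_self[of d] by (simp_all add: nxt_in)
qed

lemma nxt3_eq_self_iff:
  assumes "3 \<le> d" "i \<in> {1..d}"
  shows "nxt d (nxt d (nxt d i)) = i \<longleftrightarrow> d = 3"
  using funpow_nxt_eq_self_iff[OF assms(2), of 3] assms(1)
  by (auto simp: numeral_3_eq_3 dest: dvd_imp_le)

fun gen_inv_rec :: "nat \<Rightarrow> nat \<Rightarrow> nat list \<Rightarrow> nat list" where
  "gen_inv_rec d i [] = []"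
| "gen_inv_rec d i (x # w) =
     (if x = nxt d i then i # gen_inv_rec d i w
      else if x = i then nxt d i # gen_inv_rec d (nxt d i) w
      else x # w)"

definition gen_inv :: "nat \<Rightarrow> nat \<Rightarrow> nat list \<Rightarrow> nat list" where
  "gen_inv d i u = (if set u \<subseteq> {1..d} then gen_inv_rec d i u else u)"

lemma set_gen_rec_subset:
  "0 < d \<Longrightarrow> i \<in> {1..d} \<Longrightarrow> set w \<subseteq> {1..d} \<Longrightarrow> set (gen_rec d i w) \<subseteq> {1..d}"
  by (induction w arbitrary: i) (auto simp: nxt_in)

lemma set_gen_inv_rec_subset:
  "0 < d \<Longrightarrow> i \<in> {1..d} \<Longrightarrow> set w \<subseteq> {1..d} \<Longrightarrow> set (gen_inv_rec d i w) \<subseteq> {1..d}"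
  by (induction w arbitrary: i) (auto simp: nxt_in)

lemma set_gen_subset_iff [simp]:
  "0 < d \<Longrightarrow> i \<in> {1..d} \<Longrightarrow> set (gen d i w) \<subseteq> {1..d} \<longleftrightarrow> set w \<subseteq> {1..d}"
  using set_gen_rec_subset[of d i w] by (auto simp: gen_def)

lemma set_gen_inv_subset_iff [simp]:
  "0 < d \<Longrightarrow> i \<in> {1..d} \<Longrightarrow> set (gen_inv d i w) \<subseteq> {1..d} \<longleftrightarrow> set w \<subseteq> {1..d}"
  using set_gen_inv_rec_subset[of d i w] by (auto simp: gen_inv_def)

lemma gen_rec_gen_inv_rec:
  "2 \<le> d \<Longrightarrow> i \<in> {1..d} \<Longrightarrow> set w \<subseteq> {1..d} \<Longrightarrow> gen_rec d i (gen_inv_rec d i w) = w"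
  by (induction w arbitrary: i) (auto simp: nxt_in nxt_neq_self)

lemma gen_inv_rec_gen_rec:
  "2 \<le> d \<Longrightarrow> i \<in> {1..d} \<Longrightarrow> set w \<subseteq> {1..d} \<Longrightarrow> gen_inv_rec d i (gen_rec d i w) = w"
  by (induction w arbitrary: i) (auto simp: nxt_in nxt_neq_self)

lemma gen_gen_inv [simp]: "2 \<le> d \<Longrightarrow> i \<in> {1..d} \<Longrightarrow> gen d i (gen_inv d i u) = u"
  using set_gen_inv_rec_subset[of d i u] gen_rec_gen_inv_rec[of d i u]
  by (auto simp: gen_def gen_inv_def)

lemma gen_inv_gen [simp]: "2 \<le> d \<Longrightarrow> i \<in> {1..d} \<Longrightarrow> gen_inv d i (gen d i u) = u"
  using set_gen_rec_subset[of d i u] gen_inv_rec_gen_rec[of d i u]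
  by (auto simp: gen_def gen_inv_def)

lemma bij_gen: "2 \<le> d \<Longrightarrow> i \<in> {1..d} \<Longrightarrow> bij (gen d i)"
  by (rule o_bij[of "gen_inv d i"]) (auto simp: fun_eq_iff)

lemma bij_gen_inv: "2 \<le> d \<Longrightarrow> i \<in> {1..d} \<Longrightarrow> bij (gen_inv d i)"
  by (rule o_bij[of "gen d i"]) (auto simp: fun_eq_iff)

lemma inv_gen: "2 \<le> d \<Longrightarrow> i \<in> {1..d} \<Longrightarrow> inv (gen d i) = gen_inv d i"
  by (rule inv_unique_comp) (auto simp: fun_eq_iff)

lemma inv_gen_inv: "2 \<le> d \<Longrightarrow> i \<in> {1..d} \<Longrightarrow> inv (gen_inv d i) = gen d i"
  by (rule inv_unique_comp) (auto simp: fun_eq_iff)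

lemma gen_Cons:
  "x \<in> {1..d} \<Longrightarrow> set w \<subseteq> {1..d} \<Longrightarrow> gen d j (x # w) =
    (if x = j then nxt d j # gen d j w else if x = nxt d j then j # gen d (nxt d j) w else x # w)"
  by (simp add: gen_def)

lemma gen_inv_Cons:
  "x \<in> {1..d} \<Longrightarrow> set w \<subseteq> {1..d} \<Longrightarrow> gen_inv d j (x # w) =
    (if x = nxt d j then j # gen_inv d j w else if x = j then nxt d j # gen_inv d (nxt d j) w else x # w)"
  by (simp add: gen_inv_def)

lemma gen_Cons_fixed: "y \<noteq> j \<Longrightarrow> y \<noteq> nxt d j \<Longrightarrow> gen d j (y # v) = y # v"
  by (simp add: gen_def)

lemma gen_Nil [simp]: "gen d j [] = []" by (simp add: gen_def)

lemma gen_inv_Nil [simp]: "gen_inv d j [] = []" by (simp add: gen_inv_def)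

lemma gen_outside: "\<not> set u \<subseteq> {1..d} \<Longrightarrow> gen d j u = u" by (simp add: gen_def)

lemma gen_inv_outside: "\<not> set u \<subseteq> {1..d} \<Longrightarrow> gen_inv d j u = u" by (simp add: gen_inv_def)

lemma Gd_comp: "f \<in> Gd d \<Longrightarrow> g \<in> Gd d \<Longrightarrow> f \<circ> g \<in> Gd d"
proof (induction f rule: Gd.induct)
  case Gd_id
  then show ?case by simp
next
  case (Gd_gen f i)
  then have "pmul (f \<circ> g) (gen d i) \<in> Gd d" by (intro Gd.Gd_gen)
  then show ?case by (simp only: pmul_def comp_assoc)
next
  case (Gd_geninv f i)
  then have "pmul (f \<circ> g) (pinv (gen d i)) \<in> Gd d" by (intro Gd.Gd_geninv)
  then show ?case by (simp only: pmul_def comp_assoc)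
qed

lemma gen_in_Gd: "i \<in> {1..d} \<Longrightarrow> gen d i \<in> Gd d"
  using Gd.Gd_gen[OF Gd.Gd_id, of i d] by (simp add: pmul_def)

lemma gen_inv_in_Gd: "2 \<le> d \<Longrightarrow> i \<in> {1..d} \<Longrightarrow> gen_inv d i \<in> Gd d"
  using Gd.Gd_geninv[OF Gd.Gd_id, of i d] by (simp add: pmul_def pinv_def inv_gen)

lemma xi_eq_comp:
  assumes "2 \<le> d" "i \<in> {1..d}"
  defines "i1 \<equiv> nxt d i" and "i2 \<equiv> nxt d (nxt d i)"
  shows "xi d i = gen d i \<circ> gen d i1 \<circ> gen_inv d i \<circ> gen d i2 \<circ> gen d i1
     \<circ> gen_inv d i2 \<circ> gen_inv d i1 \<circ> gen_inv d i1"
proof -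
  have "i1 \<in> {1..d}" "i2 \<in> {1..d}" using assms by (simp_all add: nxt_in)
  then show ?thesis
    using assms unfolding xi_def Let_def comm_def pmul_def pinv_def
    by (simp add: o_inv_distrib bij_comp bij_gen bij_gen_inv inv_gen inv_gen_inv fun_eq_iff)
qed

lemma xi_in_Gd: "2 \<le> d \<Longrightarrow> i \<in> {1..d} \<Longrightarrow> xi d i \<in> Gd d"
  unfolding xi_eq_comp by (intro Gd_comp gen_in_Gd gen_inv_in_Gd) (simp_all add: nxt_in)

lemma xi_Cons:
  assumes "3 \<le> d" "i \<in> {1..d}" "x \<in> {1..d}" "set w \<subseteq> {1..d}"
  shows "xi d i (x # w) = xi_perm d i x # w"
proof -
  have "0 < d" "2 \<le> d" using assms(1) by simp_all
  note distinct = nxt_distinct3[OF assms(1,2)] nxt_distinct3[OF assms(1) nxt_in[of d i]]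
  consider "x = i" | "x = nxt d i" | "x = nxt d (nxt d i)" | "x = nxt d (nxt d (nxt d i))"
    | "x \<notin> {i, nxt d i, nxt d (nxt d i), nxt d (nxt d (nxt d i))}" by blast
  then show ?thesis
    unfolding xi_eq_comp[OF \<open>2 \<le> d\<close> assms(2)] xi_perm_def tr_def Let_def
    using assms \<open>0 < d\<close> distinct distinct[symmetric]
    by cases (simp_all add: gen_Cons gen_inv_Cons)
qed

lemma xi_outside: "2 \<le> d \<Longrightarrow> i \<in> {1..d} \<Longrightarrow> \<not> set u \<subseteq> {1..d} \<Longrightarrow> xi d i u = u"
  by (simp add: xi_eq_comp gen_outside gen_inv_outside nxt_in)

lemma xi_Nil: "2 \<le> d \<Longrightarrow> i \<in> {1..d} \<Longrightarrow> xi d i [] = []"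
  by (simp add: xi_eq_comp)

lemma xi_perm_in: "0 < d \<Longrightarrow> i \<in> {1..d} \<Longrightarrow> x \<in> {1..d} \<Longrightarrow> xi_perm d i x \<in> {1..d}"
  by (simp add: xi_perm_def tr_def Let_def)

lemma xi_perm_outside: "0 < d \<Longrightarrow> i \<in> {1..d} \<Longrightarrow> x \<notin> {1..d} \<Longrightarrow> xi_perm d i x = x"
  by (auto simp: xi_perm_def tr_def Let_def)

lemma has_order_xi_perm_two:
  assumes "4 \<le> d" "i \<in> {1..d}"
  shows "has_order (xi_perm d i) 2"
proof -
  have "3 \<le> d" using assms(1) by simp
  note distinct = nxt_distinct3[OF this assms(2)] nxt_distinct3[OF this nxt_in[of d i]]
    nxt3_eq_self_iff[OF this assms(2)]
  have "xi_perm d i ^^ 2 = id"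
    using distinct assms(1) by (auto simp: xi_perm_def tr_def Let_def numeral_2_eq_2)
  moreover have "xi_perm d i i \<noteq> i"
    using distinct assms(1) by (auto simp: xi_perm_def tr_def Let_def)
  ultimately show ?thesis by (auto simp: has_order_two_iff)
qed

lemma has_order_xi_perm_three:
  assumes "i \<in> {1..3}"
  shows "has_order (xi_perm 3 i) 3"
proof -
  note distinct = nxt_distinct3[OF _ assms] nxt3_eq_self_iff[OF _ assms]
  have "(xi_perm 3 i ^^ 3) x = x" for x
    using distinct by (auto simp: xi_perm_def tr_def Let_def numeral_3_eq_3)
  moreover have "xi_perm 3 i i \<noteq> i" "(xi_perm 3 i ^^ 2) i \<noteq> i"
    using distinct by (auto simp: xi_perm_def tr_def Let_def numeral_2_eq_2)
  ultimately show ?thesis by (auto simp: has_order_three_iff)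
qed

lemma has_order_xi:
  assumes "3 \<le> d" "i \<in> {1..d}"
  shows "has_order (xi d i) (if d = 3 then 3 else 2)"
proof -
  have "0 < d" "2 \<le> d" using assms(1) by simp_all
  have "has_order (xi d i) k \<longleftrightarrow> has_order (xi_perm d i) k" for k
  proof (rule has_order_iff_first_level[where X = "{1..d}"])
    show "xi d i (x # w) = xi_perm d i x # w" if "x \<in> {1..d}" "set w \<subseteq> {1..d}" for x w
      using xi_Cons[OF assms that] .
    show "xi d i u = u" if "u = [] \<or> \<not> set u \<subseteq> {1..d}" for u
      using that xi_Nil[OF \<open>2 \<le> d\<close> assms(2)] xi_outside[OF \<open>2 \<le> d\<close> assms(2)] by blast
    show "xi_perm d i ` {1..d} \<subseteq> {1..d}"
      using xi_perm_in[OF \<open>0 < d\<close> assms(2)] by blast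
    show "xi_perm d i x = x" if "x \<notin> {1..d}" for x
      using xi_perm_outside[OF \<open>0 < d\<close> assms(2) that] .
  qed
  moreover have "d \<noteq> 3 \<Longrightarrow> 4 \<le> d" using assms(1) by simp
  ultimately show ?thesis
    using assms has_order_xi_perm_two has_order_xi_perm_three by auto
qed

(* gen_comp d [j1, ..., jn] applies a_jn first, so it is the product
   a_jn ... a_j1; in particular prod_up d = a_1 a_2 ... a_d and
   prod_down d = a_d ... a_1. *)
definition gen_comp :: "nat \<Rightarrow> nat list \<Rightarrow> nat list \<Rightarrow> nat list" where
  "gen_comp d js = foldr (\<lambda>j f. gen d j \<circ> f) js id"

lemma gen_comp_Nil [simp]: "gen_comp d [] = id"
  by (simp add: gen_comp_def)

lemma gen_comp_Cons [simp]: "gen_comp d (j # js) = gen d j \<circ> gen_comp d js"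
  by (simp add: gen_comp_def)

lemma gen_comp_append: "gen_comp d (js @ ks) = gen_comp d js \<circ> gen_comp d ks"
  by (induction js) auto

lemma gen_comp_in_Gd: "set js \<subseteq> {1..d} \<Longrightarrow> gen_comp d js \<in> Gd d"
  by (induction js) (auto intro!: Gd_comp gen_in_Gd Gd.Gd_id)

lemma set_gen_comp_subset:
  "0 < d \<Longrightarrow> set js \<subseteq> {1..d} \<Longrightarrow> set w \<subseteq> {1..d} \<Longrightarrow> set (gen_comp d js w) \<subseteq> {1..d}"
  by (induction js) auto

lemma gen_comp_onto:
  assumes "2 \<le> d" "set js \<subseteq> {1..d}" "set u \<subseteq> {1..d}"
  shows "\<exists>v. set v \<subseteq> {1..d} \<and> gen_comp d js v = u"
  using assms(2,3)
proof (induction js arbitrary: u)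
  case (Cons j js)
  have "set js \<subseteq> {1..d}" "set (gen_inv d j u) \<subseteq> {1..d}" using Cons.prems assms(1) by simp_all
  then obtain v where "set v \<subseteq> {1..d}" "gen_comp d js v = gen_inv d j u"
    using Cons.IH by blast
  then show ?case using Cons.prems assms(1) by auto
qed auto

lemma gen_comp_Cons_fixed:
  "(\<And>j. j \<in> set js \<Longrightarrow> y \<noteq> j \<and> y \<noteq> nxt d j) \<Longrightarrow> gen_comp d js (y # v) = y # v"
  by (induction js) (auto simp: gen_Cons_fixed)

definition prod_up :: "nat \<Rightarrow> nat list \<Rightarrow> nat list" where
  "prod_up d = gen_comp d (rev [1..<Suc d])"

definition prod_down :: "nat \<Rightarrow> nat list \<Rightarrow> nat list" where
  "prod_down d = gen_comp d [1..<Suc d]"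

lemma prod_up_in_Gd: "prod_up d \<in> Gd d"
  unfolding prod_up_def by (rule gen_comp_in_Gd) auto

lemma upt_one_Suc_split: "3 \<le> d \<Longrightarrow> [1..<Suc d] = 1 # [2..<d] @ [d]"
  using upt_conv_Cons[of 1 "Suc d"] upt_Suc_append[of 2 d] by (auto simp: numeral_2_eq_2)

lemma prod_up_Cons:
  assumes "3 \<le> x" "x \<le> d" "set w \<subseteq> {1..d}"
  shows "prod_up d (x # w) = (x - 1) # gen d x w"
proof -
  have split: "[1..<Suc d] = [1..<x - 1] @ (x - 1) # [x..<Suc d]"
    using assms upt_add_eq_append[of 1 "x - 1" "Suc d - (x - 1)"] upt_conv_Cons[of "x - 1" "Suc d"]
    by auto
  have "gen_comp d (rev [1..<x - 1]) (x # w) = x # w"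
  proof (rule gen_comp_Cons_fixed)
    fix j assume "j \<in> set (rev [1..<x - 1])"
    then have "1 \<le> j" "j < x - 1" by auto
    then show "x \<noteq> j \<and> x \<noteq> nxt d j" using assms(2) nxt_of_less[of j d] by auto
  qed
  moreover have "gen d (x - 1) (x # w) = (x - 1) # gen d x w"
    using assms by (simp add: gen_Cons nxt_of_less)
  moreover have "gen_comp d (rev [x..<Suc d]) ((x - 1) # v) = (x - 1) # v" for v
  proof (rule gen_comp_Cons_fixed)
    fix j assume "j \<in> set (rev [x..<Suc d])"
    then have "j \<in> {1..d}" "2 \<le> x - 1" "x - 1 \<le> j" "x - 1 \<noteq> j"
      using assms(1) by (auto simp del: upt_Suc)
    then show "x - 1 \<noteq> j \<and> x - 1 \<noteq> nxt d j"
      using nxt_neq_of_le by metis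
  qed
  ultimately show ?thesis
    unfolding prod_up_def split by (simp add: gen_comp_append)
qed

lemma prod_up_Cons_two:
  assumes "3 \<le> d" "set w \<subseteq> {1..d}"
  shows "prod_up d (2 # w) = d # gen d 1 (gen d 2 w)"
proof -
  have "gen d 1 (2 # w) = 1 # gen d 2 w"
    using assms by (simp add: gen_Cons nxt_of_less)
  moreover have "gen_comp d (rev [2..<d]) (1 # v) = 1 # v" for v
    by (rule gen_comp_Cons_fixed) (auto simp: nxt_of_less)
  moreover have "gen d d (1 # v) = d # gen d 1 v" if "set v \<subseteq> {1..d}" for v
    using assms that by (simp add: gen_Cons nxt_self)
  ultimately show ?thesis
    using assms unfolding prod_up_def upt_one_Suc_split[OF assms(1)]
    by (simp add: gen_comp_append)
qed

lemma prod_down_Cons: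
  assumes "2 \<le> x" "x < d" "set w \<subseteq> {1..d}"
  shows "prod_down d (x # w) = Suc x # gen d x w"
proof -
  have split: "[1..<Suc d] = [1..<x] @ x # [Suc x..<Suc d]"
    using assms upt_add_eq_append[of 1 x "Suc d - x"] upt_conv_Cons[of x "Suc d"] by auto
  have "gen_comp d [Suc x..<Suc d] (x # w) = x # w"
  proof (rule gen_comp_Cons_fixed)
    fix j assume "j \<in> set [Suc x..<Suc d]"
    then have "j \<in> {1..d}" "x < j" by (auto simp del: upt_Suc)
    then show "x \<noteq> j \<and> x \<noteq> nxt d j"
      using assms(1) nxt_neq_of_le[of j d x] by auto
  qed
  moreover have "gen d x (x # w) = Suc x # gen d x w"
    using assms by (simp add: gen_Cons nxt_of_less)
  moreover have "gen_comp d [1..<x] (Suc x # v) = Suc x # v" for v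
    by (rule gen_comp_Cons_fixed) (use assms in \<open>auto simp: nxt_of_less\<close>)
  ultimately show ?thesis
    unfolding prod_down_def split by (simp add: gen_comp_append)
qed

lemma prod_down_Cons_last:
  assumes "3 \<le> d" "set w \<subseteq> {1..d}"
  shows "prod_down d (d # w) = 2 # gen d 1 (gen d d w)"
proof -
  have "gen d d (d # w) = 1 # gen d d w"
    using assms by (simp add: gen_Cons nxt_self)
  moreover have "gen_comp d [2..<d] (1 # v) = 1 # v" for v
    by (rule gen_comp_Cons_fixed) (auto simp: nxt_of_less)
  moreover have "gen d 1 (1 # v) = 2 # gen d 1 v" if "set v \<subseteq> {1..d}" for v
    using assms that by (simp add: gen_Cons nxt_of_less)
  ultimately show ?thesis
    using assms unfolding prod_down_def upt_one_Suc_split[OF assms(1)]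
    by (simp add: gen_comp_append)
qed

lemma funpow_prod_up_Cons_two:
  assumes "3 \<le> d" "set w \<subseteq> {1..d}" "1 \<le> m" "m \<le> d - 1"
  shows "(prod_up d ^^ m) (2 # w) = (Suc d - m) # gen_comp d [Suc (Suc d) - m..<Suc d] (gen d 1 (gen d 2 w))"
  using assms(3,4)
proof (induction m)
  case (Suc m)
  show ?case
  proof (cases "m = 0")
    case True
    then show ?thesis using prod_up_Cons_two[OF assms(1,2)] by simp
  next
    case False
    let ?x = "Suc d - m"
    let ?v = "gen_comp d [Suc (Suc d) - m..<Suc d] (gen d 1 (gen d 2 w))"
    have "set ?v \<subseteq> {1..d}"
      using assms(1,2) Suc.prems by (intro set_gen_comp_subset) (auto simp del: upt_Suc)
    moreover have "3 \<le> ?x" "?x \<le> d" using Suc.prems False by auto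
    ultimately have "prod_up d (?x # ?v) = (?x - 1) # gen d ?x ?v"
      by (intro prod_up_Cons)
    moreover have "[?x..<Suc d] = ?x # [Suc ?x..<Suc d]"
      using \<open>?x \<le> d\<close> by (intro upt_conv_Cons) simp
    ultimately show ?thesis
      using Suc False by (simp add: Suc_diff_le)
  qed
qed simp

lemma funpow_prod_down_Cons_two:
  assumes "3 \<le> d" "set w \<subseteq> {1..d}" "m \<le> d - 2"
  shows "(prod_down d ^^ m) (2 # w) = (m + 2) # gen_comp d (rev [2..<m + 2]) w"
  using assms(3)
proof (induction m)
  case (Suc m)
  have "set (gen_comp d (rev [2..<m + 2]) w) \<subseteq> {1..d}"
    using assms(1,2) Suc.prems by (intro set_gen_comp_subset) (auto simp del: upt_Suc)
  then show ?case
    using Suc prod_down_Cons[of "m + 2" d] by simp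
qed simp

lemma funpow_prod_up_return:
  assumes "3 \<le> d" "set w \<subseteq> {1..d}"
  shows "(prod_up d ^^ (d - 1)) (2 # w) = 2 # gen_comp d ([3..<Suc d] @ [1, 2]) w"
  using funpow_prod_up_Cons_two[OF assms, of "d - 1"] assms(1)
  by (simp add: gen_comp_append numeral_3_eq_3 Suc_diff_le)

lemma funpow_prod_down_return:
  assumes "3 \<le> d" "set w \<subseteq> {1..d}"
  shows "(prod_down d ^^ (d - 1)) (2 # w) = 2 # gen_comp d (1 # rev [2..<Suc d]) w"
proof -
  have "d - 1 = Suc (d - 2)" "d - 2 + 2 = d" using assms(1) by simp_all
  moreover have "set (gen_comp d (rev [2..<d]) w) \<subseteq> {1..d}"
    using assms by (intro set_gen_comp_subset) (auto simp del: upt_Suc)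
  ultimately show ?thesis
    using funpow_prod_down_Cons_two[OF assms, of "d - 2"] prod_down_Cons_last[OF assms(1)] assms(1)
    by simp
qed

lemma prod_up_periodic_descent:
  assumes "3 \<le> d" "0 < n" "\<forall>u \<in> {w. set w \<subseteq> {1..d}}. (prod_up d ^^ n) u = u"
  shows "\<exists>m. 0 < m \<and> m < n \<and> (\<forall>u \<in> {w. set w \<subseteq> {1..d}}. (prod_down d ^^ m) u = u)"
proof (rule periodic_descent[OF _ _ _ _ _ _ _ _ assms(3,2)])
  have "0 < d" "set ([3..<Suc d] @ [1, 2]) \<subseteq> {1..d}" using assms(1) by (auto simp del: upt_Suc)
  then show "gen_comp d ([3..<Suc d] @ [1, 2]) ` {w. set w \<subseteq> {1..d}} \<subseteq> {w. set w \<subseteq> {1..d}}"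
    using set_gen_comp_subset by (simp add: image_subset_iff)
  have "[1..<Suc d] = [1, 2] @ [3..<Suc d]"
    using assms(1) upt_conv_Cons[of 1 "Suc d"] upt_conv_Cons[of 2 "Suc d"]
    by (simp add: numeral_2_eq_2 numeral_3_eq_3 del: upt_Suc)
  then show "gen_comp d [1, 2] (gen_comp d ([3..<Suc d] @ [1, 2]) v) = prod_down d (gen_comp d [1, 2] v)"
    for v by (simp add: prod_down_def gen_comp_append del: upt_Suc)
  show "(prod_up d ^^ (d - 1)) (2 # v) = 2 # gen_comp d ([3..<Suc d] @ [1, 2]) v"
    if "v \<in> {w. set w \<subseteq> {1..d}}" for v
    using funpow_prod_up_return[OF assms(1)] that by simp
  show "(prod_up d ^^ j) (2 # v) \<noteq> 2 # u"
    if "0 < j" "j < d - 1" "v \<in> {w. set w \<subseteq> {1..d}}" for j v u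
    using funpow_prod_up_Cons_two[OF assms(1), of v j] that by (auto simp del: upt_Suc)
  show "{w. set w \<subseteq> {1..d}} \<subseteq> gen_comp d [1, 2] ` {w. set w \<subseteq> {1..d}}"
    using gen_comp_onto[of d "[1, 2]"] assms(1) by fastforce
qed (use assms(1) in auto)

lemma prod_down_periodic_descent:
  assumes "3 \<le> d" "0 < n" "\<forall>u \<in> {w. set w \<subseteq> {1..d}}. (prod_down d ^^ n) u = u"
  shows "\<exists>m. 0 < m \<and> m < n \<and> (\<forall>u \<in> {w. set w \<subseteq> {1..d}}. (prod_up d ^^ m) u = u)"
proof (rule periodic_descent[OF _ _ _ _ _ _ _ _ assms(3,2)])
  have "0 < d" "set (1 # rev [2..<Suc d]) \<subseteq> {1..d}" using assms(1) by (auto simp del: upt_Suc)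
  then show "gen_comp d (1 # rev [2..<Suc d]) ` {w. set w \<subseteq> {1..d}} \<subseteq> {w. set w \<subseteq> {1..d}}"
    using set_gen_comp_subset by (simp add: image_subset_iff)
  have "rev [1..<Suc d] = rev [2..<Suc d] @ [1]"
    using assms(1) upt_conv_Cons[of 1 "Suc d"] by (simp add: numeral_2_eq_2 del: upt_Suc)
  then show "gen_comp d (rev [2..<Suc d]) (gen_comp d (1 # rev [2..<Suc d]) v)
      = prod_up d (gen_comp d (rev [2..<Suc d]) v)" for v
    by (simp add: prod_up_def gen_comp_append del: upt_Suc)
  show "(prod_down d ^^ (d - 1)) (2 # v) = 2 # gen_comp d (1 # rev [2..<Suc d]) v"
    if "v \<in> {w. set w \<subseteq> {1..d}}" for v
    using funpow_prod_down_return[OF assms(1)] that by simp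
  show "(prod_down d ^^ j) (2 # v) \<noteq> 2 # u"
    if "0 < j" "j < d - 1" "v \<in> {w. set w \<subseteq> {1..d}}" for j v u
    using funpow_prod_down_Cons_two[OF assms(1), of v j] that by (auto simp del: upt_Suc)
  show "{w. set w \<subseteq> {1..d}} \<subseteq> gen_comp d (rev [2..<Suc d]) ` {w. set w \<subseteq> {1..d}}"
    using gen_comp_onto[of d "rev [2..<Suc d]"] assms(1) by (fastforce simp del: upt_Suc)
qed (use assms(1) in auto)

lemma prod_up_down_not_periodic:
  assumes "3 \<le> d" "0 < n"
  shows "\<not> (\<forall>u \<in> {w. set w \<subseteq> {1..d}}. (prod_up d ^^ n) u = u)
    \<and> \<not> (\<forall>u \<in> {w. set w \<subseteq> {1..d}}. (prod_down d ^^ n) u = u)"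
  using assms(2)
proof (induction n rule: less_induct)
  case (less n)
  show ?case
  proof (intro conjI notI)
    assume "\<forall>u \<in> {w. set w \<subseteq> {1..d}}. (prod_up d ^^ n) u = u"
    then obtain m where "0 < m" "m < n" "\<forall>u \<in> {w. set w \<subseteq> {1..d}}. (prod_down d ^^ m) u = u"
      using prod_up_periodic_descent[OF assms(1) less.prems] by blast
    then show False using less.IH by blast
  next
    assume "\<forall>u \<in> {w. set w \<subseteq> {1..d}}. (prod_down d ^^ n) u = u"
    then obtain m where "0 < m" "m < n" "\<forall>u \<in> {w. set w \<subseteq> {1..d}}. (prod_up d ^^ m) u = u"
      using prod_down_periodic_descent[OF assms(1) less.prems] by blast
    then show False using less.IH by blast
  qed
qed

lemma infinite_order_prod_up:
  assumes "3 \<le> d"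
  shows "infinite_order (prod_up d)"
  unfolding infinite_order_def
proof (intro allI impI)
  fix n :: nat
  assume "0 < n"
  then obtain u where "(prod_up d ^^ n) u \<noteq> u"
    using prod_up_down_not_periodic[OF assms] by blast
  then show "prod_up d ^^ n \<noteq> id" by auto
qed

theorem mainTheorem13:
  fixes d :: nat
  assumes "d \<ge> 3" and "odd d"
  shows "\<not> torsion_group (Gd d) \<and> \<not> torsion_free_group (Gd d)
    \<and> (\<exists>g \<in> Gd d. infinite_order g)
    \<and> (\<forall>i \<in> {1..d}. xi d i \<in> Gd d \<and> xi d i \<noteq> id
         \<and> (\<forall>x w. x \<in> {1..d} \<longrightarrow> set w \<subseteq> {1..d} \<longrightarrow> xi d i (x # w) = xi_perm d i x # w)
         \<and> has_order (xi d i) (if d = 3 then 3 else 2))"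
proof -
  have xi: "xi d i \<in> Gd d \<and> xi d i \<noteq> id
      \<and> (\<forall>x w. x \<in> {1..d} \<longrightarrow> set w \<subseteq> {1..d} \<longrightarrow> xi d i (x # w) = xi_perm d i x # w)
      \<and> has_order (xi d i) (if d = 3 then 3 else 2)" if "i \<in> {1..d}" for i
  proof -
    have order: "has_order (xi d i) (if d = 3 then 3 else 2)"
      using has_order_xi[OF assms(1) that] .
    then have "xi d i \<noteq> id" by (rule has_order_imp_neq_id) simp
    then show ?thesis
      using order xi_in_Gd xi_Cons assms(1) that by simp
  qed
  have "\<not> torsion_free_group (Gd d)"
    using xi[of 1] assms(1) by (auto simp: torsion_free_group_def has_order_def)
  moreover have "\<not> torsion_group (Gd d)"
    using prod_up_in_Gd[of d] infinite_order_prod_up[OF assms(1)]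
    unfolding torsion_group_def infinite_order_def by blast
  ultimately show ?thesis
    using xi prod_up_in_Gd infinite_order_prod_up[OF assms(1)] by blast
qed

end
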